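(* Let $d\ge2$ and let $\sigma,\gamma$ satisfy $$\sigma\in(\max\{-d,-3\},0)\setminus\{-2,-d/2\},\qquad \gamma-d-1\ge\sigma.$$ Then there exist $k>0$ and $b>0$ such that the set $$\mathcal M=\{\psi:\mathbb R^d\to\mathbb R \text{ measurable}:\ |\psi(\eta)|<k|\eta|^\sigma e^{-b|\eta|}\ \text{for all }\eta\}$$ is invariant under the azimuthal renormalization operator $\mathcal R_\beta$ for every $\beta\in(0,1)$.
   Context: Spherical coordinates on $\mathbb R^d$: $\eta=(|\eta|,\hat\eta_1,\dots,\hat\eta_{d-1})$, polar angles $\hat\eta_1,\dots,\hat\eta_{d-2}$, azimuthal angle $\hat\eta_{d-1}$. Let $c=\gamma-d-1$. For $\beta\in(0,1)$ the azimuthal renormalization operator on scalar $\psi$ is $$\mathcal R_\beta[\psi](\eta)=\beta^{c}e^{|\eta|^\gamma(1-\beta^{-\gamma})}\psi(\eta/\beta)+\gamma\int_1^{1/\beta}\frac{e^{|\eta|^\gamma(1-t^\gamma)}\,|\eta|\prod_{k=1}^{d-2}\sin\hat\eta_k}{t^{c}}\int_{\mathbb R^d}\psi(x)\,\psi(\eta t-x)\cos\hat x_{d-1}\,\sin\widehat{(\eta t-x)}_{d-1}\,dx\,dt,$$ with azimuthal angles $\hat x_{d-1}$, $\widehat{(\eta t-x)}_{d-1}$ measured relative to that of $\eta$ and empty product $=1$ for $d=2$. *)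

theory Defs
  imports "HOL-Analysis.Analysis"
begin

text \<open>Spherical coordinates on R^d, d = CARD('n).  The coordinates of x are
  ordered by an enumeration e of the index type: e 0, ..., e (d-1) correspond to
  x_1, ..., x_d.  Standard convention:
  x_1 = r cos th_1, x_2 = r sin th_1 cos th_2, ...,
  x_{d-1} = r sin th_1 ... sin th_{d-2} cos th_{d-1},
  x_d = r sin th_1 ... sin th_{d-2} sin th_{d-1}.\<close>

definition sph_tail :: "(nat \<Rightarrow> 'n::finite) \<Rightarrow> real^'n \<Rightarrow> nat \<Rightarrow> real" where
  "sph_tail e x k = sqrt (\<Sum>m\<in>{k..<CARD('n)}. (x $ e m)^2)"

text \<open>Polar angle th_k, for k = 1, ..., d-2 (values in [0, pi]).\<close>
definition polar_angle :: "(nat \<Rightarrow> 'n::finite) \<Rightarrow> real^'n \<Rightarrow> nat \<Rightarrow> real" where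
  "polar_angle e x k = arccos (x $ e (k - 1) / sph_tail e x (k - 1))"

definition azimuthal_angle :: "(nat \<Rightarrow> 'n::finite) \<Rightarrow> real^'n \<Rightarrow> real" where
  "azimuthal_angle e x = Arg (Complex (x $ e (CARD('n) - 2)) (x $ e (CARD('n) - 1)))"

definition renorm_op ::
  "(nat \<Rightarrow> 'n::finite) \<Rightarrow> real \<Rightarrow> real \<Rightarrow> (real^'n \<Rightarrow> real) \<Rightarrow> real^'n \<Rightarrow> real" where
  "renorm_op e \<gamma> \<beta> \<psi> \<eta> =
     (let c = \<gamma> - real CARD('n) - 1 in
       \<beta> powr c * exp (norm \<eta> powr \<gamma> * (1 - \<beta> powr (-\<gamma>))) * \<psi> ((1 / \<beta>) *\<^sub>R \<eta>)
     + \<gamma> * (LBINT t=1..1/\<beta>.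
          exp (norm \<eta> powr \<gamma> * (1 - t powr \<gamma>)) * norm \<eta>
            * (\<Prod>k\<in>{1..CARD('n) - 2}. sin (polar_angle e \<eta> k)) / t powr c
          * (\<integral>x. \<psi> x * \<psi> (t *\<^sub>R \<eta> - x)
                 * cos (azimuthal_angle e x - azimuthal_angle e \<eta>)
                 * sin (azimuthal_angle e (t *\<^sub>R \<eta> - x) - azimuthal_angle e \<eta>) \<partial>lborel)))"

text \<open>The set M: measurable psi with |psi eta| < k |eta|^sigma e^{-b|eta|};
  at eta = 0 the bound is +infinity (sigma < 0), so no condition is imposed there.\<close>
definition M_set :: "real \<Rightarrow> real \<Rightarrow> real \<Rightarrow> (real^'n::finite \<Rightarrow> real) set" where
  "M_set \<sigma> k b = {\<psi>. \<psi> \<in> borel_measurable lborel \<and>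
     (\<forall>\<eta>. \<eta> \<noteq> 0 \<longrightarrow> \<bar>\<psi> \<eta>\<bar> < k * norm \<eta> powr \<sigma> * exp (- b * norm \<eta>))}"

end

theory Submission
  imports Defs
begin

text \<open>Take b = 1 and write r = |\<eta>|, g(t) = t^(\<sigma> - c) exp(r^\<gamma> (1 - t^\<gamma>) - t r)
  (\<open>renorm_envelope\<close>), so that g(1) = e^(-r). The linear part of the operator is bounded
  by k r^\<sigma> g(1/\<beta>). For the quadratic part, the self-convolution of |x|^\<sigma> e^(-|x|) is at
  most K e^(-|y|) (|y|^\<sigma> + |y|^(2\<sigma> + d)): split the domain into the balls of radius |y|/2
  around 0 and y, a bounded middle region and the far field, and integrate |x|^q over balls
  and their complements by dyadic shells (\<sigma> + d > 0 makes the singularities integrable).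
  Since \<sigma> \<le> c and 2\<sigma> + d lies between \<sigma> and \<sigma> + \<gamma> - 1, once kK \<le> min 1 (1/\<gamma>) the
  integrand in t is dominated by k r^\<sigma> (-g'(t)) / \<gamma>. The two parts thus add up to less than
  k r^\<sigma> (g(1/\<beta>) + g(1) - g(1/\<beta>)) = k r^\<sigma> e^(-r).\<close>

section \<open>Measurability of the operator\<close>

lemma borel_measurable_cos_Arg [measurable]: "(\<lambda>z. cos (Arg z)) \<in> borel_measurable borel"
proof -
  have "(\<lambda>z. cos (Arg z)) = (\<lambda>z. if z = 0 then 1 else Re z / norm z)"
    by (auto simp: cos_Arg Arg_zero)
  then show ?thesis by simp
qed

lemma borel_measurable_sin_Arg [measurable]: "(\<lambda>z. sin (Arg z)) \<in> borel_measurable borel"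
proof -
  have "(\<lambda>z. sin (Arg z)) = (\<lambda>z. if z = 0 then 0 else Im z / norm z)"
    by (auto simp: sin_Arg Arg_zero)
  then show ?thesis by simp
qed

lemma borel_measurable_cos_azimuthal_angle [measurable]:
  "(\<lambda>x. cos (azimuthal_angle e x)) \<in> borel_measurable borel"
  unfolding azimuthal_angle_def Complex_eq by measurable

lemma borel_measurable_sin_azimuthal_angle [measurable]:
  "(\<lambda>x. sin (azimuthal_angle e x)) \<in> borel_measurable borel"
  unfolding azimuthal_angle_def Complex_eq by measurable

lemma abs_le_sph_tail:
  fixes x :: "real^'n::finite"
  shows "\<bar>x $ e k\<bar> \<le> sph_tail e x k \<or> sph_tail e x k = 0"
proof (cases "k < CARD('n)")
  case True
  then have "(x $ e k)\<^sup>2 \<le> (\<Sum>m\<in>{k..<CARD('n)}. (x $ e m)\<^sup>2)"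
    by (intro member_le_sum) auto
  then show ?thesis
    unfolding sph_tail_def using real_sqrt_le_mono by fastforce
qed (simp add: sph_tail_def)

lemma sin_polar_angle:
  fixes x :: "real^'n::finite"
  shows "sin (polar_angle e x k) = sqrt (1 - (x $ e (k - 1) / sph_tail e x (k - 1))\<^sup>2)"
proof -
  define u where "u = x $ e (k - 1) / sph_tail e x (k - 1)"
  have "\<bar>u\<bar> \<le> 1"
    using abs_le_sph_tail[of x e "k - 1"] by (auto simp: u_def abs_divide divide_le_eq_1)
  then have "- 1 \<le> u" "u \<le> 1" by linarith+
  then show ?thesis
    unfolding polar_angle_def u_def[symmetric] by (rule sin_arccos)
qed

lemma borel_measurable_sin_polar_angle [measurable]:
  "(\<lambda>x. sin (polar_angle e x k)) \<in> borel_measurable borel"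
  unfolding sin_polar_angle sph_tail_def by measurable

lemma borel_measurable_renorm_op:
  assumes [measurable]: "\<psi> \<in> borel_measurable borel"
  shows "renorm_op e \<gamma> \<beta> \<psi> \<in> borel_measurable borel"
proof -
  have [measurable]: "einterval a b \<in> sets borel" for a b by (simp add: einterval_def)
  show ?thesis
    unfolding renorm_op_def Let_def interval_lebesgue_integral_def set_lebesgue_integral_def
      cos_diff sin_diff
    by measurable
qed

section \<open>Integrals of powers of the distance over balls and their complements\<close>

lemma ex_powr_two_bracket:
  fixes x :: real
  assumes "1 \<le> x"
  shows "\<exists>n::nat. 2 powr n \<le> x \<and> x < 2 powr (Suc n)"
proof -
  define n where "n = nat \<lfloor>log 2 x\<rfloor>"
  have "real n = real_of_int \<lfloor>log 2 x\<rfloor>" using assms by (simp add: n_def)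
  then have "2 powr n \<le> x \<and> x < 2 powr (real n + 1)"
    using floor_log_eq_powr_iff[of x 2 "\<lfloor>log 2 x\<rfloor>"] assms by simp
  then show ?thesis by (intro exI[of _ n]) (simp add: add.commute)
qed

lemma cball_in_borel [measurable]: "cball c r \<in> sets borel"
  by (simp add: borel_closed)

lemma nn_integral_le_geometric_cball:
  fixes c :: "'a::euclidean_space" and f :: "'a \<Rightarrow> ennreal"
  assumes f: "\<And>x. f x \<le> (\<Sum>j. ennreal (a j) * indicator (cball c (r j)) x)"
    and a: "\<And>j. 0 \<le> a j" and r: "\<And>j. 0 \<le> r j"
    and geometric: "\<And>j. a j * unit_ball_vol DIM('a) * r j ^ DIM('a) = A * \<rho> ^ j"
    and A: "0 \<le> A" and \<rho>: "0 \<le> \<rho>" "\<rho> < 1"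
  shows "(\<integral>\<^sup>+x. f x \<partial>lborel) \<le> ennreal (A / (1 - \<rho>))"
proof -
  have "(\<integral>\<^sup>+x. f x \<partial>lborel) \<le> (\<integral>\<^sup>+x. (\<Sum>j. ennreal (a j) * indicator (cball c (r j)) x) \<partial>lborel)"
    by (intro nn_integral_mono f)
  also have "\<dots> = (\<Sum>j. \<integral>\<^sup>+x. ennreal (a j) * indicator (cball c (r j)) x \<partial>lborel)"
    by (intro nn_integral_suminf) measurable
  also have "\<dots> = (\<Sum>j. ennreal (A * \<rho> ^ j))"
    using a r by (simp add: nn_integral_cmult_indicator emeasure_cball ennreal_mult'
        unit_ball_vol_nonneg mult.assoc flip: geometric)
  also have "\<dots> = ennreal (\<Sum>j. A * \<rho> ^ j)"
    using A \<rho> by (intro suminf_ennreal2) (auto intro: summable_mult summable_geometric)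
  also have "(\<Sum>j. A * \<rho> ^ j) = A / (1 - \<rho>)"
    using \<rho> by (simp add: suminf_mult suminf_geometric summable_geometric divide_simps)
  finally show ?thesis .
qed

lemma ennreal_le_suminf: "g j \<le> (\<Sum>j. g j :: ennreal)"
  using sum_le_suminf[OF summableI, of "{j}" g] by simp

lemma nn_integral_powr_cball_le:
  fixes q :: real
  assumes q: "q < 0" "0 < q + DIM('a)"
  obtains C where "0 \<le> C" "\<And>(c::'a::euclidean_space) R. 0 < R \<Longrightarrow>
     (\<integral>\<^sup>+x. ennreal (norm (x - c) powr q * indicator (cball c R) x) \<partial>lborel) \<le> ennreal (C * R powr (q + DIM('a)))"
proof
  define d where "d = real DIM('a)"
  define \<rho> where "\<rho> = (2::real) powr (- (q + d))"
  have \<rho>: "0 \<le> \<rho>" "\<rho> < 1" using q by (auto simp: \<rho>_def d_def intro!: powr_less_one)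
  define C where "C = unit_ball_vol d * 2 powr (- q) / (1 - \<rho>)"
  show "0 \<le> C" using \<rho> by (simp add: C_def unit_ball_vol_nonneg d_def)
  fix c :: 'a and R :: real assume R: "0 < R"
  define r where "r j = R / 2 powr real j" for j
  have "(\<integral>\<^sup>+x. ennreal (norm (x - c) powr q * indicator (cball c R) x) \<partial>lborel)
      \<le> ennreal (unit_ball_vol d * 2 powr (- q) * R powr (q + d) / (1 - \<rho>))"
  proof (rule nn_integral_le_geometric_cball)
    fix x :: 'a
    show "ennreal (norm (x - c) powr q * indicator (cball c R) x)
        \<le> (\<Sum>j. ennreal (r (Suc j) powr q) * indicator (cball c (r j)) x)"
    proof (cases "x \<noteq> c \<and> x \<in> cball c R")
      case True
      define s where "s = norm (x - c)"
      have s: "0 < s" "s \<le> R" using True by (auto simp: s_def dist_norm norm_minus_commute)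
      then obtain n :: nat where "2 powr n \<le> R / s" "R / s < 2 powr (Suc n)"
        using ex_powr_two_bracket[of "R / s"] by auto
      then have "s \<le> r n" "r (Suc n) < s"
        using s R by (auto simp: r_def field_simps)
      then have "ennreal (norm (x - c) powr q * indicator (cball c R) x)
          \<le> ennreal (r (Suc n) powr q) * indicator (cball c (r n)) x"
        using True q R by (auto simp: s_def r_def dist_norm norm_minus_commute indicator_def
            intro!: ennreal_leI powr_mono2')
      also have "\<dots> \<le> (\<Sum>j. ennreal (r (Suc j) powr q) * indicator (cball c (r j)) x)"
        by (rule ennreal_le_suminf)
      finally show ?thesis .
    qed (auto simp: indicator_def)
  next
    fix j
    have r_powr: "r i = R * 2 powr (- real i)" for i by (simp add: r_def powr_minus divide_inverse)
    have pow: "r j ^ DIM('a) = r j powr d" using R by (simp add: r_def d_def powr_realpow)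
    show "r (Suc j) powr q * unit_ball_vol DIM('a) * r j ^ DIM('a)
        = unit_ball_vol d * 2 powr (- q) * R powr (q + d) * \<rho> ^ j"
      unfolding pow d_def[symmetric] using R by (simp add: r_powr \<rho>_def powr_mult powr_powr powr_power
          powr_add[symmetric] algebra_simps)
  qed (use R \<rho> in \<open>auto simp: r_def unit_ball_vol_nonneg d_def\<close>)
  then show "(\<integral>\<^sup>+x. ennreal (norm (x - c) powr q * indicator (cball c R) x) \<partial>lborel)
      \<le> ennreal (C * R powr (q + DIM('a)))"
    by (simp add: C_def d_def)
qed

lemma nn_integral_powr_outside_cball_le:
  fixes p :: real
  assumes p: "p + DIM('a) < 0"
  obtains C where "0 \<le> C" "\<And>(c::'a::euclidean_space) R. 0 < R \<Longrightarrow>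
     (\<integral>\<^sup>+x. ennreal (norm (x - c) powr p * indicator (- cball c R) x) \<partial>lborel) \<le> ennreal (C * R powr (p + DIM('a)))"
proof
  define d where "d = real DIM('a)"
  define \<rho> where "\<rho> = (2::real) powr (p + d)"
  have \<rho>: "0 \<le> \<rho>" "\<rho> < 1" using p by (auto simp: \<rho>_def d_def intro!: powr_less_one)
  define C where "C = unit_ball_vol d * 2 powr d / (1 - \<rho>)"
  show "0 \<le> C" using \<rho> by (simp add: C_def unit_ball_vol_nonneg d_def)
  fix c :: 'a and R :: real assume R: "0 < R"
  define r where "r j = R * 2 powr real j" for j
  have "(\<integral>\<^sup>+x. ennreal (norm (x - c) powr p * indicator (- cball c R) x) \<partial>lborel)
      \<le> ennreal (unit_ball_vol d * 2 powr d * R powr (p + d) / (1 - \<rho>))"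
  proof (rule nn_integral_le_geometric_cball)
    fix x :: 'a
    show "ennreal (norm (x - c) powr p * indicator (- cball c R) x)
        \<le> (\<Sum>j. ennreal (r j powr p) * indicator (cball c (r (Suc j))) x)"
    proof (cases "x \<in> cball c R")
      case False
      define s where "s = norm (x - c)"
      have s: "R < s" using False by (auto simp: s_def dist_norm norm_minus_commute)
      then obtain n :: nat where "2 powr n \<le> s / R" "s / R < 2 powr (Suc n)"
        using ex_powr_two_bracket[of "s / R"] R by auto
      then have "r n \<le> s" "s \<le> r (Suc n)"
        using R by (auto simp: r_def field_simps)
      then have "ennreal (norm (x - c) powr p * indicator (- cball c R) x)
          \<le> ennreal (r n powr p) * indicator (cball c (r (Suc n))) x"
        using False p R by (auto simp: s_def r_def dist_norm norm_minus_commute indicator_def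
            intro!: ennreal_leI powr_mono2')
      also have "\<dots> \<le> (\<Sum>j. ennreal (r j powr p) * indicator (cball c (r (Suc j))) x)"
        by (rule ennreal_le_suminf)
      finally show ?thesis .
    qed (auto simp: indicator_def)
  next
    fix j
    have pow: "r (Suc j) ^ DIM('a) = r (Suc j) powr d" using R by (simp add: r_def d_def powr_realpow)
    show "r j powr p * unit_ball_vol DIM('a) * r (Suc j) ^ DIM('a)
        = unit_ball_vol d * 2 powr d * R powr (p + d) * \<rho> ^ j"
      unfolding pow d_def[symmetric] using R by (simp add: r_def \<rho>_def powr_mult powr_powr powr_power
          powr_add[symmetric] algebra_simps)
  qed (use R \<rho> in \<open>auto simp: r_def unit_ball_vol_nonneg d_def\<close>)
  then show "(\<integral>\<^sup>+x. ennreal (norm (x - c) powr p * indicator (- cball c R) x) \<partial>lborel)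
      \<le> ennreal (C * R powr (p + DIM('a)))"
    by (simp add: C_def d_def)
qed

section \<open>The convolution estimate\<close>

lemma exp_neg_le_powr:
  fixes m u :: real
  assumes "0 < m" "0 < u"
  shows "exp (- u) \<le> m powr m * u powr (- m)"
proof -
  have "u / m \<le> exp (u / m)" using exp_ge_add_one_self[of "u / m"] by linarith
  then have "(u / m) powr m \<le> exp (u / m) powr m" using assms by (intro powr_mono2) auto
  also have "exp (u / m) powr m = exp u" using assms by (simp add: powr_def)
  finally have "(u / m) powr m \<le> exp u" .
  then have "1 / exp u \<le> 1 / (u / m) powr m" using assms by (intro divide_left_mono) auto
  then show ?thesis using assms by (simp add: exp_minus powr_divide powr_minus_divide field_simps)
qed

lemma powr_exp_mult_le_near:
  fixes a b s \<sigma> :: real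
  assumes "\<sigma> \<le> 0" "0 < s" "s / 2 \<le> b" "s \<le> a + b"
  shows "a powr \<sigma> * exp (- a) * (b powr \<sigma> * exp (- b)) \<le> exp (- s) * ((s / 2) powr \<sigma> * a powr \<sigma>)"
proof -
  have "a powr \<sigma> * b powr \<sigma> \<le> a powr \<sigma> * (s / 2) powr \<sigma>"
    using assms by (intro mult_left_mono powr_mono2') auto
  moreover have "exp (- a) * exp (- b) \<le> exp (- s)" using assms by (simp flip: exp_add)
  ultimately have "(a powr \<sigma> * b powr \<sigma>) * (exp (- a) * exp (- b)) \<le> (a powr \<sigma> * (s / 2) powr \<sigma>) * exp (- s)"
    by (rule mult_mono) auto
  then show ?thesis by (simp add: algebra_simps)
qed

lemma powr_exp_mult_le_far:
  fixes a b s \<sigma> m :: real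
  assumes "\<sigma> \<le> 0" "0 < s" "2 * s < a" "a - s \<le> b" "0 < m"
  shows "a powr \<sigma> * exp (- a) * (b powr \<sigma> * exp (- b))
    \<le> exp (- s) * (2 powr (- \<sigma>) * m powr m * a powr (2 * \<sigma> - m))"
proof -
  have "b powr \<sigma> \<le> (a / 2) powr \<sigma>" using assms by (intro powr_mono2') auto
  also have "(a / 2) powr \<sigma> = 2 powr (- \<sigma>) * a powr \<sigma>"
    by (simp add: powr_divide powr_minus_divide)
  finally have b: "b powr \<sigma> * exp (- b) \<le> 2 powr (- \<sigma>) * a powr \<sigma> * exp (- s)"
    using assms by (intro mult_mono) auto
  have a: "a powr \<sigma> * exp (- a) \<le> a powr \<sigma> * (m powr m * a powr (- m))"
    using assms by (intro mult_left_mono exp_neg_le_powr) auto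
  have "a powr \<sigma> * exp (- a) * (b powr \<sigma> * exp (- b))
      \<le> a powr \<sigma> * (m powr m * a powr (- m)) * (2 powr (- \<sigma>) * a powr \<sigma> * exp (- s))"
    using a b by (rule mult_mono) auto
  also have "\<dots> = exp (- s) * (2 powr (- \<sigma>) * m powr m * a powr (2 * \<sigma> - m))"
    by (simp add: powr_add[symmetric] algebra_simps)
  finally show ?thesis .
qed

lemma powr_exp_convolution_kernel_le:
  fixes x y :: "'a::real_normed_vector" and \<sigma> m :: real
  assumes \<sigma>: "\<sigma> \<le> 0" and m: "0 < m" and y: "y \<noteq> 0"
  defines "s \<equiv> norm y"
  shows "norm x powr \<sigma> * exp (- norm x) * (norm (y - x) powr \<sigma> * exp (- norm (y - x)))
    \<le> exp (- s) * ((s / 2) powr \<sigma> * (norm (x - 0) powr \<sigma> * indicator (cball 0 (s / 2)) x)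
        + (s / 2) powr \<sigma> * (norm (x - y) powr \<sigma> * indicator (cball y (s / 2)) x)
        + (s / 2) powr \<sigma> * (s / 2) powr \<sigma> * indicator (cball 0 (2 * s)) x
        + 2 powr (- \<sigma>) * m powr m * (norm (x - 0) powr (2 * \<sigma> - m) * indicator (- cball 0 (2 * s)) x))"
    (is "?F \<le> exp (- s) * (?T1 + ?T2 + ?T3 + ?T4)")
proof -
  define a where "a = norm x"
  define b where "b = norm (y - x)"
  have s: "0 < s" using y by (simp add: s_def)
  have terms_nonneg: "0 \<le> ?T1" "0 \<le> ?T2" "0 \<le> ?T3" "0 \<le> ?T4" by auto
  have triangle: "s \<le> a + b" "a - s \<le> b"
    using norm_triangle_ineq[of x "y - x"] norm_triangle_ineq[of y "x - y"]
    by (auto simp: s_def a_def b_def norm_minus_commute)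
  have F: "?F = a powr \<sigma> * exp (- a) * (b powr \<sigma> * exp (- b))" by (simp add: a_def b_def)
  consider "a \<le> s / 2" | "b \<le> s / 2" "s / 2 < a" | "s / 2 < a" "s / 2 < b" "a \<le> 2 * s"
    | "2 * s < a" by linarith
  then have "?F \<le> exp (- s) * ?T1 \<or> ?F \<le> exp (- s) * ?T2 \<or> ?F \<le> exp (- s) * ?T3 \<or> ?F \<le> exp (- s) * ?T4"
  proof cases
    case 1
    then have "?F \<le> exp (- s) * ((s / 2) powr \<sigma> * a powr \<sigma>)"
      unfolding F using \<sigma> s triangle by (intro powr_exp_mult_le_near) auto
    then show ?thesis using 1 by (simp add: a_def)
  next
    case 2
    have "?F = b powr \<sigma> * exp (- b) * (a powr \<sigma> * exp (- a))" unfolding F by simp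
    also have "\<dots> \<le> exp (- s) * ((s / 2) powr \<sigma> * b powr \<sigma>)"
      using 2 \<sigma> s triangle by (intro powr_exp_mult_le_near) auto
    finally show ?thesis using 2 by (simp add: b_def dist_norm norm_minus_commute)
  next
    case 3
    have "a powr \<sigma> * b powr \<sigma> \<le> (s / 2) powr \<sigma> * (s / 2) powr \<sigma>"
      using 3 \<sigma> s by (intro mult_mono powr_mono2') auto
    moreover have "exp (- a) * exp (- b) \<le> exp (- s)" using triangle by (simp flip: exp_add)
    ultimately have "(a powr \<sigma> * b powr \<sigma>) * (exp (- a) * exp (- b)) \<le> ((s / 2) powr \<sigma> * (s / 2) powr \<sigma>) * exp (- s)"
      by (rule mult_mono) auto
    then show ?thesis using 3 unfolding F by (simp add: a_def algebra_simps)
  next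
    case 4
    have "?F \<le> exp (- s) * (2 powr (- \<sigma>) * m powr m * a powr (2 * \<sigma> - m))"
      unfolding F using 4 \<sigma> s m triangle by (intro powr_exp_mult_le_far) auto
    then show ?thesis using 4 by (simp add: a_def)
  qed
  then show ?thesis using terms_nonneg
    by (smt (verit) exp_gt_zero mult_left_mono)
qed

lemma nn_integral_powr_exp_convolution_le_split:
  fixes y :: "'a::euclidean_space" and \<sigma> m C1 C2 :: real
  assumes \<sigma>: "\<sigma> \<le> 0" and m: "0 < m" and y: "y \<noteq> 0" and C: "0 \<le> C1" "0 \<le> C2"
    and ball: "\<And>(c::'a) R. 0 < R \<Longrightarrow>
      (\<integral>\<^sup>+x. ennreal (norm (x - c) powr \<sigma> * indicator (cball c R) x) \<partial>lborel) \<le> ennreal (C1 * R powr m)"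
    and tail: "\<And>(c::'a) R. 0 < R \<Longrightarrow>
      (\<integral>\<^sup>+x. ennreal (norm (x - c) powr (2 * \<sigma> - m) * indicator (- cball c R) x) \<partial>lborel) \<le> ennreal (C2 * R powr \<sigma>)"
  defines "s \<equiv> norm y"
  shows "(\<integral>\<^sup>+x. ennreal (norm x powr \<sigma> * exp (- norm x) * (norm (y - x) powr \<sigma> * exp (- norm (y - x)))) \<partial>lborel)
    \<le> ennreal (exp (- s) * (2 * ((s / 2) powr \<sigma> * (C1 * (s / 2) powr m))
        + (s / 2) powr \<sigma> * (s / 2) powr \<sigma> * (unit_ball_vol DIM('a) * (2 * s) ^ DIM('a))
        + 2 powr (- \<sigma>) * m powr m * (C2 * (2 * s) powr \<sigma>)))"
proof -
  have s: "0 < s" using y by (simp add: s_def)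
  define c1 where "c1 = (s / 2) powr \<sigma>"
  define c4 where "c4 = 2 powr (- \<sigma>) * m powr m"
  define B1 where "B1 = C1 * (s / 2) powr m"
  define B3 where "B3 = unit_ball_vol DIM('a) * (2 * s) ^ DIM('a)"
  define B4 where "B4 = C2 * (2 * s) powr \<sigma>"
  have c_nonneg: "0 \<le> c1" "0 \<le> c4" by (simp_all add: c1_def c4_def)
  have B: "0 \<le> B1" "0 \<le> B3" "0 \<le> B4" using C s by (simp_all add: B1_def B3_def B4_def unit_ball_vol_nonneg)
  have "(\<integral>\<^sup>+x. ennreal (norm x powr \<sigma> * exp (- norm x) * (norm (y - x) powr \<sigma> * exp (- norm (y - x)))) \<partial>lborel)
    \<le> (\<integral>\<^sup>+x. ennreal (exp (- s)) *
        (ennreal c1 * ennreal (norm (x - (0::'a)) powr \<sigma> * indicator (cball 0 (s / 2)) x)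
        + ennreal c1 * ennreal (norm (x - y) powr \<sigma> * indicator (cball y (s / 2)) x)
        + ennreal (c1 * c1) * indicator (cball 0 (2 * s)) x
        + ennreal c4 * ennreal (norm (x - (0::'a)) powr (2 * \<sigma> - m) * indicator (- cball 0 (2 * s)) x)) \<partial>lborel)"
    (is "_ \<le> (\<integral>\<^sup>+x. ?M x \<partial>lborel)")
  proof (rule nn_integral_mono)
    fix x
    have "norm x powr \<sigma> * exp (- norm x) * (norm (y - x) powr \<sigma> * exp (- norm (y - x)))
      \<le> exp (- s) * (c1 * (norm (x - (0::'a)) powr \<sigma> * indicator (cball 0 (s / 2)) x)
        + c1 * (norm (x - y) powr \<sigma> * indicator (cball y (s / 2)) x)
        + c1 * c1 * indicator (cball 0 (2 * s)) x
        + c4 * (norm (x - (0::'a)) powr (2 * \<sigma> - m) * indicator (- cball 0 (2 * s)) x))"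
      (is "?F \<le> ?R")
      unfolding c1_def c4_def s_def using \<sigma> m y by (intro powr_exp_convolution_kernel_le) auto
    then have "ennreal ?F \<le> ennreal ?R" by (rule ennreal_leI)
    also have "ennreal ?R = ?M x"
      by (simp add: c1_def c4_def ennreal_mult ennreal_plus ennreal_indicator del: diff_0_right)
    finally show "ennreal ?F \<le> ?M x" .
  qed
  also have "\<dots> = ennreal (exp (- s)) *
        (ennreal c1 * (\<integral>\<^sup>+x. ennreal (norm (x - (0::'a)) powr \<sigma> * indicator (cball 0 (s / 2)) x) \<partial>lborel)
        + ennreal c1 * (\<integral>\<^sup>+x. ennreal (norm (x - y) powr \<sigma> * indicator (cball y (s / 2)) x) \<partial>lborel)
        + ennreal (c1 * c1) * emeasure lborel (cball (0::'a) (2 * s))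
        + ennreal c4 * (\<integral>\<^sup>+x. ennreal (norm (x - (0::'a)) powr (2 * \<sigma> - m) * indicator (- cball 0 (2 * s)) x) \<partial>lborel))"
    by (simp add: nn_integral_add nn_integral_cmult nn_integral_cmult_indicator)
  also have "\<dots> \<le> ennreal (exp (- s)) *
        (ennreal c1 * ennreal B1 + ennreal c1 * ennreal B1 + ennreal (c1 * c1) * ennreal B3 + ennreal c4 * ennreal B4)"
    unfolding B1_def B3_def B4_def
    using s by (intro mult_left_mono add_mono ball tail) (auto simp: emeasure_cball)
  also have "\<dots> = ennreal (exp (- s) * (c1 * B1 + c1 * B1 + c1 * c1 * B3 + c4 * B4))"
    using B c_nonneg by (simp add: ennreal_mult ennreal_plus) (simp add: mult_2 mult.commute)
  finally show ?thesis
    by (simp add: c1_def c4_def B1_def B3_def B4_def mult.left_commute)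
qed

lemma convolution_split_sum_le:
  fixes s \<sigma> C1 C2 V :: real and n :: nat
  assumes s: "0 < s" and C: "0 \<le> C1" "0 \<le> C2" "0 \<le> V"
  defines "d \<equiv> real n" and "m \<equiv> \<sigma> + real n"
  shows "2 * ((s / 2) powr \<sigma> * (C1 * (s / 2) powr m))
        + (s / 2) powr \<sigma> * (s / 2) powr \<sigma> * (V * (2 * s) ^ n)
        + 2 powr (- \<sigma>) * m powr m * (C2 * (2 * s) powr \<sigma>)
      \<le> (2 * C1 * 2 powr (- (2 * \<sigma> + d)) + V * 2 powr (d - 2 * \<sigma>) + m powr m * C2)
        * (s powr \<sigma> + s powr (2 * \<sigma> + d))"
proof -
  have "(s / 2) powr \<sigma> * (C1 * (s / 2) powr m) = C1 * ((s / 2) powr \<sigma> * (s / 2) powr (\<sigma> + d))"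
    by (simp add: m_def d_def)
  also have "\<dots> = C1 * 2 powr (- (2 * \<sigma> + d)) * s powr (2 * \<sigma> + d)"
    using s by (simp add: powr_divide powr_minus powr_add[symmetric] field_simps)
  finally have ball_term: "(s / 2) powr \<sigma> * (C1 * (s / 2) powr m) = \<dots>" .
  have "(2 * s) ^ n = 2 powr d * s powr d"
    using powr_realpow[of "2 * s" n] s by (simp add: d_def powr_mult)
  then have "(s / 2) powr \<sigma> * (s / 2) powr \<sigma> * (V * (2 * s) ^ n)
      = V * ((s / 2) powr (2 * \<sigma>) * (2 powr d * s powr d))"
    by (simp add: powr_add[symmetric])
  also have "\<dots> = V * 2 powr (d - 2 * \<sigma>) * s powr (2 * \<sigma> + d)"
    using s by (simp add: powr_divide powr_diff powr_add[symmetric] field_simps)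
  finally have middle_term: "(s / 2) powr \<sigma> * (s / 2) powr \<sigma> * (V * (2 * s) ^ n) = \<dots>" .
  have tail_term: "2 powr (- \<sigma>) * m powr m * (C2 * (2 * s) powr \<sigma>) = m powr m * C2 * s powr \<sigma>"
    by (simp add: powr_mult powr_minus field_simps)
  show ?thesis
    unfolding ball_term middle_term tail_term using C by (simp add: algebra_simps)
qed

lemma nn_integral_powr_exp_convolution_le:
  fixes \<sigma> :: real
  assumes \<sigma>: "\<sigma> < 0" and integrable_at_zero: "0 < \<sigma> + DIM('a)"
  obtains K where "0 \<le> K" "\<And>y::'a::euclidean_space. y \<noteq> 0 \<Longrightarrow>
    (\<integral>\<^sup>+x. ennreal (norm x powr \<sigma> * exp (- norm x) * (norm (y - x) powr \<sigma> * exp (- norm (y - x)))) \<partial>lborel)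
      \<le> ennreal (K * exp (- norm y) * (norm y powr \<sigma> + norm y powr (2 * \<sigma> + DIM('a))))"
proof -
  define d where "d = real DIM('a)"
  define m where "m = \<sigma> + d"
  have m: "0 < m" using integrable_at_zero by (simp add: m_def d_def)
  obtain C1 where C1: "0 \<le> C1" "\<And>(c::'a) R. 0 < R \<Longrightarrow>
     (\<integral>\<^sup>+x. ennreal (norm (x - c) powr \<sigma> * indicator (cball c R) x) \<partial>lborel) \<le> ennreal (C1 * R powr m)"
    using nn_integral_powr_cball_le[OF \<sigma> integrable_at_zero] unfolding m_def d_def by blast
  obtain C2 where C2: "0 \<le> C2" "\<And>(c::'a) R. 0 < R \<Longrightarrow>
     (\<integral>\<^sup>+x. ennreal (norm (x - c) powr (2 * \<sigma> - m) * indicator (- cball c R) x) \<partial>lborel) \<le> ennreal (C2 * R powr \<sigma>)"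
    using nn_integral_powr_outside_cball_le[of "2 * \<sigma> - m", where 'a='a] \<sigma> unfolding m_def d_def by auto
  define V where "V = unit_ball_vol d"
  have V: "0 \<le> V" by (simp add: V_def d_def unit_ball_vol_nonneg)
  define K where "K = 2 * C1 * 2 powr (- (2 * \<sigma> + d)) + V * 2 powr (d - 2 * \<sigma>) + m powr m * C2"
  show thesis
  proof
    show "0 \<le> K" using C1 C2 V by (simp add: K_def)
    fix y :: 'a assume y: "y \<noteq> 0"
    define s where "s = norm y"
    have s: "0 < s" using y by (simp add: s_def)
    have sum_le: "2 * ((s / 2) powr \<sigma> * (C1 * (s / 2) powr m))
        + (s / 2) powr \<sigma> * (s / 2) powr \<sigma> * (V * (2 * s) ^ DIM('a))
        + 2 powr (- \<sigma>) * m powr m * (C2 * (2 * s) powr \<sigma>)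
      \<le> K * (s powr \<sigma> + s powr (2 * \<sigma> + d))"
      unfolding K_def d_def m_def using s C1(1) C2(1) V by (rule convolution_split_sum_le)
    have "(\<integral>\<^sup>+x. ennreal (norm x powr \<sigma> * exp (- norm x) * (norm (y - x) powr \<sigma> * exp (- norm (y - x)))) \<partial>lborel)
      \<le> ennreal (exp (- s) * (2 * ((s / 2) powr \<sigma> * (C1 * (s / 2) powr m))
        + (s / 2) powr \<sigma> * (s / 2) powr \<sigma> * (V * (2 * s) ^ DIM('a))
        + 2 powr (- \<sigma>) * m powr m * (C2 * (2 * s) powr \<sigma>)))"
      unfolding s_def V_def d_def using \<sigma> m y C1 C2 by (intro nn_integral_powr_exp_convolution_le_split) auto
    also have "\<dots> \<le> ennreal (exp (- s) * (K * (s powr \<sigma> + s powr (2 * \<sigma> + d))))"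
      using sum_le by (intro ennreal_leI mult_left_mono) auto
    finally show "(\<integral>\<^sup>+x. ennreal (norm x powr \<sigma> * exp (- norm x) * (norm (y - x) powr \<sigma> * exp (- norm (y - x)))) \<partial>lborel)
      \<le> ennreal (K * exp (- norm y) * (norm y powr \<sigma> + norm y powr (2 * \<sigma> + DIM('a))))"
      by (simp add: s_def d_def mult_ac)
  qed
qed

section \<open>Bounds for the two parts of the operator\<close>

lemma abs_integral_le_nn_integral:
  fixes f :: "'a \<Rightarrow> real"
  shows "ennreal \<bar>integral\<^sup>L M f\<bar> \<le> (\<integral>\<^sup>+x. ennreal \<bar>f x\<bar> \<partial>M)"
proof (cases "integrable M f")
  case True
  then show ?thesis using integral_norm_bound_ennreal[OF True] by simp
qed (simp add: not_integrable_integral_eq)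

lemma abs_set_integral_le:
  fixes f g :: "'a \<Rightarrow> real"
  assumes g: "set_integrable M S g" and le: "\<And>x. x \<in> S \<Longrightarrow> \<bar>f x\<bar> \<le> g x"
  shows "\<bar>LINT x:S|M. f x\<bar> \<le> (LINT x:S|M. g x)"
proof -
  have g_nonneg: "0 \<le> indicator S x * g x" for x
    using le[of x] by (auto simp: indicator_def)
  have "ennreal \<bar>LINT x:S|M. f x\<bar> \<le> (\<integral>\<^sup>+x. ennreal \<bar>indicator S x * f x\<bar> \<partial>M)"
    unfolding set_lebesgue_integral_def using abs_integral_le_nn_integral by simp
  also have "\<dots> \<le> (\<integral>\<^sup>+x. ennreal (indicator S x * g x) \<partial>M)"
    using le by (intro nn_integral_mono ennreal_leI) (auto simp: indicator_def)
  also have "\<dots> = ennreal (LINT x:S|M. g x)"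
    using g g_nonneg unfolding set_lebesgue_integral_def set_integrable_def
    by (simp add: nn_integral_eq_integral)
  finally show ?thesis
    using g_nonneg by (simp add: set_lebesgue_integral_def integral_nonneg ennreal_le_iff)
qed

lemma abs_convolution_integral_le:
  fixes \<psi> w :: "'a::euclidean_space \<Rightarrow> real" and y :: 'a
  assumes k: "0 \<le> k" and B_nonneg: "0 \<le> B"
    and \<psi>: "\<And>x. x \<noteq> 0 \<Longrightarrow> \<bar>\<psi> x\<bar> \<le> k * (norm x powr \<sigma> * exp (- norm x))"
    and w: "\<And>x. \<bar>w x\<bar> \<le> 1"
    and B: "(\<integral>\<^sup>+x. ennreal (norm x powr \<sigma> * exp (- norm x) * (norm (y - x) powr \<sigma> * exp (- norm (y - x)))) \<partial>lborel) \<le> ennreal B"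
  shows "\<bar>\<integral>x. \<psi> x * \<psi> (y - x) * w x \<partial>lborel\<bar> \<le> k\<^sup>2 * B"
proof -
  have "ennreal \<bar>\<integral>x. \<psi> x * \<psi> (y - x) * w x \<partial>lborel\<bar> \<le> (\<integral>\<^sup>+x. ennreal \<bar>\<psi> x * \<psi> (y - x) * w x\<bar> \<partial>lborel)"
    by (rule abs_integral_le_nn_integral)
  also have "\<dots> \<le> (\<integral>\<^sup>+x. ennreal (k\<^sup>2) * ennreal (norm x powr \<sigma> * exp (- norm x) * (norm (y - x) powr \<sigma> * exp (- norm (y - x)))) \<partial>lborel)"
  proof (rule nn_integral_mono_AE)
    show "AE x in lborel. ennreal \<bar>\<psi> x * \<psi> (y - x) * w x\<bar>
       \<le> ennreal (k\<^sup>2) * ennreal (norm x powr \<sigma> * exp (- norm x) * (norm (y - x) powr \<sigma> * exp (- norm (y - x))))"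
      using AE_lborel_singleton[of 0] AE_lborel_singleton[of y]
    proof eventually_elim
      case (elim x)
      have "\<bar>\<psi> x * \<psi> (y - x) * w x\<bar> \<le> \<bar>\<psi> x\<bar> * \<bar>\<psi> (y - x)\<bar>"
        using w[of x] by (simp add: abs_mult mult_left_le)
      also have "\<dots> \<le> k * (norm x powr \<sigma> * exp (- norm x)) * (k * (norm (y - x) powr \<sigma> * exp (- norm (y - x))))"
        using elim \<psi>[of x] \<psi>[of "y - x"] by (intro mult_mono) auto
      finally have "\<bar>\<psi> x * \<psi> (y - x) * w x\<bar>
          \<le> k\<^sup>2 * (norm x powr \<sigma> * exp (- norm x) * (norm (y - x) powr \<sigma> * exp (- norm (y - x))))"
        by (simp add: power2_eq_square ac_simps)
      then show ?case by (simp add: ennreal_mult'[symmetric] ennreal_leI)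
    qed
  qed
  also have "\<dots> \<le> ennreal (k\<^sup>2) * ennreal B"
    using B by (simp add: nn_integral_cmult mult_left_mono)
  finally show ?thesis
    using k B_nonneg by (simp add: ennreal_mult'[symmetric] ennreal_le_iff)
qed

definition renorm_envelope :: "real \<Rightarrow> real \<Rightarrow> real \<Rightarrow> real \<Rightarrow> real" where
  "renorm_envelope \<gamma> a r t = t powr a * exp (r powr \<gamma> * (1 - t powr \<gamma>) - t * r)"

definition renorm_envelope_rate :: "real \<Rightarrow> real \<Rightarrow> real \<Rightarrow> real \<Rightarrow> real" where
  "renorm_envelope_rate \<gamma> a r t = renorm_envelope \<gamma> a r t * (\<gamma> * r powr \<gamma> * t powr (\<gamma> - 1) + r - a / t)"

lemma renorm_envelope_at_1 [simp]: "renorm_envelope \<gamma> a r 1 = exp (- r)"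
  by (simp add: renorm_envelope_def)

lemma has_real_derivative_renorm_envelope:
  assumes "0 < t"
  shows "(renorm_envelope \<gamma> a r has_real_derivative - renorm_envelope_rate \<gamma> a r t) (at t)"
proof -
  define \<phi> where "\<phi> t = r powr \<gamma> * (1 - t powr \<gamma>) - t * r" for t
  have "(\<phi> has_real_derivative - (\<gamma> * r powr \<gamma> * t powr (\<gamma> - 1) + r)) (at t)"
    unfolding \<phi>_def using assms by (auto intro!: derivative_eq_intros simp: algebra_simps)
  then have "((\<lambda>t. t powr a * exp (\<phi> t)) has_real_derivative
      a * t powr (a - 1) * exp (\<phi> t) + exp (\<phi> t) * - (\<gamma> * r powr \<gamma> * t powr (\<gamma> - 1) + r) * t powr a) (at t)"
    by (intro DERIV_mult has_real_derivative_powr[OF assms] DERIV_fun_exp)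
  moreover have "t powr (a - 1) = t powr a / t" using assms by (simp add: powr_diff)
  ultimately show ?thesis
    unfolding renorm_envelope_rate_def renorm_envelope_def[abs_def] \<phi>_def[symmetric]
    by (simp add: algebra_simps)
qed

lemma interval_integral_renorm_envelope_rate:
  assumes "1 \<le> T"
  shows "continuous_on {1..T} (renorm_envelope_rate \<gamma> a r)"
    and "(LBINT t=1..T. renorm_envelope_rate \<gamma> a r t) = exp (- r) - renorm_envelope \<gamma> a r T"
proof -
  show cont: "continuous_on {1..T} (renorm_envelope_rate \<gamma> a r)"
    unfolding renorm_envelope_rate_def renorm_envelope_def by (auto intro!: continuous_intros)
  have "(LBINT t=1..T. renorm_envelope_rate \<gamma> a r t)
      = - renorm_envelope \<gamma> a r T - (- renorm_envelope \<gamma> a r 1)"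
  proof (subst one_ereal_def, rule interval_integral_FTC_finite)
    show "continuous_on {min 1 T..max 1 T} (renorm_envelope_rate \<gamma> a r)"
      using cont assms by simp
    fix t assume "min 1 T \<le> t"
    then have "0 < t" using assms by simp
    then have "((\<lambda>t. - renorm_envelope \<gamma> a r t) has_real_derivative renorm_envelope_rate \<gamma> a r t) (at t)"
      using DERIV_minus[OF has_real_derivative_renorm_envelope] by simp
    then show "((\<lambda>t. - renorm_envelope \<gamma> a r t) has_vector_derivative renorm_envelope_rate \<gamma> a r t)
        (at t within {min 1 T..max 1 T})"
      by (simp add: has_real_derivative_iff_has_vector_derivative has_vector_derivative_at_within)
  qed
  then show "(LBINT t=1..T. renorm_envelope_rate \<gamma> a r t) = exp (- r) - renorm_envelope \<gamma> a r T"
    by simp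
qed

lemma renorm_envelope_scaled_eq:
  fixes r t \<gamma> \<sigma> c :: real
  assumes "0 < r" "0 < t" "0 < \<gamma>"
  shows "r powr \<sigma> / \<gamma> * renorm_envelope \<gamma> (\<sigma> - c) r t * (\<gamma> * r powr \<gamma> * t powr (\<gamma> - 1) + r)
    = exp (r powr \<gamma> * (1 - t powr \<gamma>)) * exp (- (t * r)) / t powr c * r
      * ((t * r) powr (\<sigma> + \<gamma> - 1) + (t * r) powr \<sigma> / \<gamma>)"
proof -
  define E where "E = exp (r powr \<gamma> * (1 - t powr \<gamma>)) * exp (- (t * r))"
  have env: "renorm_envelope \<gamma> (\<sigma> - c) r t = E / t powr c * t powr \<sigma>"
  proof -
    have "exp (r powr \<gamma> * (1 - t powr \<gamma>) - t * r) = E"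
      unfolding E_def by (simp flip: exp_add)
    then show ?thesis by (simp add: renorm_envelope_def powr_diff)
  qed
  have u1: "r powr \<sigma> * r powr \<gamma> * (t powr \<sigma> * t powr (\<gamma> - 1)) = r * (t * r) powr (\<sigma> + \<gamma> - 1)"
    using assms by (simp add: powr_mult powr_add[symmetric] powr_diff field_simps)
  have u2: "r powr \<sigma> * t powr \<sigma> * r = r * (t * r) powr \<sigma>"
    by (simp add: powr_mult)
  have "r powr \<sigma> / \<gamma> * (E / t powr c * t powr \<sigma>) * (\<gamma> * r powr \<gamma> * t powr (\<gamma> - 1) + r)
      = E / t powr c * (r powr \<sigma> * r powr \<gamma> * (t powr \<sigma> * t powr (\<gamma> - 1)) + r powr \<sigma> * t powr \<sigma> * r / \<gamma>)"
    using assms by (simp add: field_simps)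
  also have "\<dots> = E / t powr c * r * ((t * r) powr (\<sigma> + \<gamma> - 1) + (t * r) powr \<sigma> / \<gamma>)"
    unfolding u1 u2 by (simp add: algebra_simps)
  finally show ?thesis unfolding env E_def .
qed

lemma renorm_envelope_mult_le_rate:
  assumes "\<sigma> \<le> c" "0 < t"
  shows "renorm_envelope \<gamma> (\<sigma> - c) r t * (\<gamma> * r powr \<gamma> * t powr (\<gamma> - 1) + r)
    \<le> renorm_envelope_rate \<gamma> (\<sigma> - c) r t"
proof -
  have "(\<sigma> - c) / t \<le> 0" using assms by (simp add: divide_nonpos_pos)
  then show ?thesis
    unfolding renorm_envelope_rate_def by (intro mult_left_mono) (auto simp: renorm_envelope_def)
qed

lemma power2_mult_sum_le:
  fixes k K \<gamma> A B :: real
  assumes "0 \<le> k" "0 < \<gamma>" "k * K \<le> 1" "\<gamma> * (k * K) \<le> 1" "0 \<le> A" "0 \<le> B"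
  shows "k\<^sup>2 * K * (A + B) \<le> k * (B + A / \<gamma>)"
proof -
  have "k\<^sup>2 * K * A = k / \<gamma> * (\<gamma> * (k * K)) * A"
    using assms by (simp add: power2_eq_square)
  also have "\<dots> \<le> k / \<gamma> * 1 * A"
    using assms by (intro mult_right_mono mult_left_mono) auto
  finally have A: "k\<^sup>2 * K * A \<le> k * (A / \<gamma>)" by simp
  have "k\<^sup>2 * K * B = k * (k * K) * B"
    by (simp add: power2_eq_square)
  also have "\<dots> \<le> k * 1 * B"
    using assms by (intro mult_right_mono mult_left_mono) auto
  finally have B: "k\<^sup>2 * K * B \<le> k * B" by simp
  have "k\<^sup>2 * K * (A + B) = k\<^sup>2 * K * A + k\<^sup>2 * K * B" by (rule distrib_left)
  with A B show ?thesis by (simp add: distrib_left)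
qed

lemma abs_renorm_integrand_le:
  fixes r t \<gamma> \<sigma> c k K P I :: real
  assumes r: "0 < r" and t: "1 \<le> t" and \<gamma>: "0 < \<gamma>" and \<sigma>: "\<sigma> \<le> c"
    and k: "0 \<le> k" and kK: "k * K \<le> 1" "\<gamma> * (k * K) \<le> 1"
    and P: "\<bar>P\<bar> \<le> 1"
    and I: "\<bar>I\<bar> \<le> k\<^sup>2 * (K * exp (- (t * r)) * ((t * r) powr \<sigma> + (t * r) powr (\<sigma> + \<gamma> - 1)))"
  shows "\<bar>exp (r powr \<gamma> * (1 - t powr \<gamma>)) * r * P / t powr c * I\<bar>
    \<le> k * (r powr \<sigma> / \<gamma> * renorm_envelope_rate \<gamma> (\<sigma> - c) r t)"
proof -
  define u where "u = t * r"
  define X where "X = exp (r powr \<gamma> * (1 - t powr \<gamma>)) * exp (- u) / t powr c * r"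
  have t0: "0 < t" using t by simp
  have X: "0 \<le> X" using r by (simp add: X_def)
  have "\<bar>exp (r powr \<gamma> * (1 - t powr \<gamma>)) * r * P / t powr c * I\<bar>
      = exp (r powr \<gamma> * (1 - t powr \<gamma>)) * r / t powr c * (\<bar>P\<bar> * \<bar>I\<bar>)"
    using r by (simp add: abs_mult)
  also have "\<dots> \<le> exp (r powr \<gamma> * (1 - t powr \<gamma>)) * r / t powr c * (1 * \<bar>I\<bar>)"
    using P r by (intro mult_left_mono mult_right_mono) auto
  also have "\<dots> \<le> exp (r powr \<gamma> * (1 - t powr \<gamma>)) * r / t powr c
      * (k\<^sup>2 * (K * exp (- u) * (u powr \<sigma> + u powr (\<sigma> + \<gamma> - 1))))"
    using I r unfolding u_def by (intro mult_left_mono) auto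
  also have "\<dots> = X * (k\<^sup>2 * K * (u powr \<sigma> + u powr (\<sigma> + \<gamma> - 1)))"
    by (simp add: X_def)
  also have "\<dots> \<le> X * (k * (u powr (\<sigma> + \<gamma> - 1) + u powr \<sigma> / \<gamma>))"
    using X k \<gamma> kK by (intro mult_left_mono power2_mult_sum_le) auto
  also have "\<dots> = k * (r powr \<sigma> / \<gamma> * (renorm_envelope \<gamma> (\<sigma> - c) r t * (\<gamma> * r powr \<gamma> * t powr (\<gamma> - 1) + r)))"
    using renorm_envelope_scaled_eq[OF r t0 \<gamma>, of \<sigma> c] by (simp add: X_def u_def mult.assoc)
  also have "\<dots> \<le> k * (r powr \<sigma> / \<gamma> * renorm_envelope_rate \<gamma> (\<sigma> - c) r t)"
    using renorm_envelope_mult_le_rate[OF \<sigma> t0] k \<gamma> by (intro mult_left_mono) auto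
  finally show ?thesis .
qed

lemma abs_renorm_linear_term_less:
  fixes \<psi> :: "'a::real_normed_vector \<Rightarrow> real"
  assumes \<beta>: "0 < \<beta>" and \<eta>: "\<eta> \<noteq> 0"
    and \<psi>: "\<And>x. x \<noteq> 0 \<Longrightarrow> \<bar>\<psi> x\<bar> < k * norm x powr \<sigma> * exp (- 1 * norm x)"
  shows "\<bar>\<beta> powr c * exp (norm \<eta> powr \<gamma> * (1 - \<beta> powr (- \<gamma>))) * \<psi> ((1 / \<beta>) *\<^sub>R \<eta>)\<bar>
    < k * norm \<eta> powr \<sigma> * renorm_envelope \<gamma> (\<sigma> - c) (norm \<eta>) (1 / \<beta>)"
proof -
  define T where "T = 1 / \<beta>"
  define r where "r = norm \<eta>"
  have T: "0 < T" using \<beta> by (simp add: T_def)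
  have "\<beta> powr c = T powr (- c)" "\<beta> powr (- \<gamma>) = T powr \<gamma>"
    using \<beta> by (simp_all add: T_def powr_minus_divide powr_divide)
  then have "\<bar>\<beta> powr c * exp (norm \<eta> powr \<gamma> * (1 - \<beta> powr (- \<gamma>))) * \<psi> ((1 / \<beta>) *\<^sub>R \<eta>)\<bar>
      = T powr (- c) * exp (r powr \<gamma> * (1 - T powr \<gamma>)) * \<bar>\<psi> (T *\<^sub>R \<eta>)\<bar>"
    by (simp add: T_def r_def abs_mult)
  also have "\<dots> < T powr (- c) * exp (r powr \<gamma> * (1 - T powr \<gamma>)) * (k * (T * r) powr \<sigma> * exp (- 1 * (T * r)))"
    using \<psi>[of "T *\<^sub>R \<eta>"] T \<eta> by (intro mult_strict_left_mono) (auto simp: r_def)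
  also have "\<dots> = k * r powr \<sigma> * (T powr \<sigma> * T powr (- c)) * (exp (r powr \<gamma> * (1 - T powr \<gamma>)) * exp (- (T * r)))"
    by (simp add: powr_mult ac_simps)
  also have "\<dots> = k * r powr \<sigma> * renorm_envelope \<gamma> (\<sigma> - c) r T"
    by (simp add: renorm_envelope_def powr_add[symmetric] exp_add[symmetric])
  finally show ?thesis by (simp add: T_def r_def)
qed

lemma abs_renorm_quadratic_term_le:
  fixes \<psi> :: "'a::euclidean_space \<Rightarrow> real" and W :: "real \<Rightarrow> 'a \<Rightarrow> real"
  assumes \<eta>: "\<eta> \<noteq> 0" and T: "1 \<le> T" and \<gamma>: "0 < \<gamma>" and \<sigma>: "\<sigma> \<le> c"
    and k: "0 \<le> k" and K: "0 \<le> K" and kK: "k * K \<le> 1" "\<gamma> * (k * K) \<le> 1"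
    and P: "\<bar>P\<bar> \<le> 1" and W: "\<And>t x. \<bar>W t x\<bar> \<le> 1"
    and \<psi>: "\<And>x. x \<noteq> 0 \<Longrightarrow> \<bar>\<psi> x\<bar> < k * norm x powr \<sigma> * exp (- 1 * norm x)"
    and conv: "\<And>y::'a. y \<noteq> 0 \<Longrightarrow>
      (\<integral>\<^sup>+x. ennreal (norm x powr \<sigma> * exp (- norm x) * (norm (y - x) powr \<sigma> * exp (- norm (y - x)))) \<partial>lborel)
        \<le> ennreal (K * exp (- norm y) * (norm y powr \<sigma> + norm y powr (\<sigma> + \<gamma> - 1)))"
  shows "\<bar>LBINT t=1..T. exp (norm \<eta> powr \<gamma> * (1 - t powr \<gamma>)) * norm \<eta> * P / t powr c
      * (\<integral>x. \<psi> x * \<psi> (t *\<^sub>R \<eta> - x) * W t x \<partial>lborel)\<bar>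
    \<le> k * (norm \<eta> powr \<sigma> / \<gamma> * (exp (- norm \<eta>) - renorm_envelope \<gamma> (\<sigma> - c) (norm \<eta>) T))"
proof -
  define r where "r = norm \<eta>"
  have r: "0 < r" using \<eta> by (simp add: r_def)
  define rate where "rate t = k * (r powr \<sigma> / \<gamma> * renorm_envelope_rate \<gamma> (\<sigma> - c) r t)" for t
  have integrand_le: "\<bar>exp (r powr \<gamma> * (1 - t powr \<gamma>)) * r * P / t powr c
      * (\<integral>x. \<psi> x * \<psi> (t *\<^sub>R \<eta> - x) * W t x \<partial>lborel)\<bar> \<le> rate t"
    if t: "t \<in> {1..T}" for t
  proof -
    have "norm (t *\<^sub>R \<eta>) = t * r" using t by (simp add: r_def)
    moreover have "t *\<^sub>R \<eta> \<noteq> 0" using t \<eta> by simp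
    ultimately have "\<bar>\<integral>x. \<psi> x * \<psi> (t *\<^sub>R \<eta> - x) * W t x \<partial>lborel\<bar>
        \<le> k\<^sup>2 * (K * exp (- (t * r)) * ((t * r) powr \<sigma> + (t * r) powr (\<sigma> + \<gamma> - 1)))"
      using k K W conv[of "t *\<^sub>R \<eta>"] \<psi> by (intro abs_convolution_integral_le) (auto simp: less_imp_le mult.assoc)
    then show ?thesis
      unfolding rate_def using r t \<gamma> \<sigma> k kK P by (intro abs_renorm_integrand_le) auto
  qed
  have "continuous_on {1..T} rate"
    unfolding rate_def using interval_integral_renorm_envelope_rate(1)[OF T] by (intro continuous_intros)
  then have "\<bar>LINT t:{1..T}|lborel. exp (r powr \<gamma> * (1 - t powr \<gamma>)) * r * P / t powr c
      * (\<integral>x. \<psi> x * \<psi> (t *\<^sub>R \<eta> - x) * W t x \<partial>lborel)\<bar> \<le> (LINT t:{1..T}|lborel. rate t)"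
    using integrand_le by (intro abs_set_integral_le borel_integrable_atLeastAtMost')
  also have "(LINT t:{1..T}|lborel. rate t) = k * (r powr \<sigma> / \<gamma> * (LBINT t=1..T. renorm_envelope_rate \<gamma> (\<sigma> - c) r t))"
    unfolding one_ereal_def interval_integral_Icc[OF T] by (simp add: rate_def)
  also have "\<dots> = k * (r powr \<sigma> / \<gamma> * (exp (- r) - renorm_envelope \<gamma> (\<sigma> - c) r T))"
    by (simp add: interval_integral_renorm_envelope_rate(2)[OF T])
  finally show ?thesis
    unfolding one_ereal_def interval_integral_Icc[OF T] by (simp add: r_def)
qed

section \<open>Invariance of the set\<close>

lemma abs_prod_sin_le_one: "\<bar>\<Prod>k\<in>A. sin (f k)\<bar> \<le> (1::real)"
  by (simp add: abs_prod prod_le_1)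

lemma powr_le_add_powr:
  fixes s a b c :: real
  assumes "0 < s" "a \<le> b" "b \<le> c"
  shows "s powr b \<le> s powr a + s powr c"
proof (cases "s \<le> 1")
  case True
  then have "s powr b \<le> s powr a" using assms by (intro powr_mono') auto
  then show ?thesis by (simp add: add_increasing2)
next
  case False
  then have "s powr b \<le> s powr c" using assms by (intro powr_mono) auto
  then show ?thesis by (simp add: add_increasing)
qed

lemma exp_powr_sum_le_double:
  fixes s K a b c :: real
  assumes "0 < s" "0 \<le> K" "a \<le> b" "b \<le> c"
  shows "K * exp (- s) * (s powr a + s powr b) \<le> 2 * K * exp (- s) * (s powr a + s powr c)"
proof -
  have "s powr b \<le> s powr a + s powr c"
    using assms by (intro powr_le_add_powr) auto
  then have "s powr a + s powr b \<le> 2 * (s powr a + s powr c)"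
    using powr_ge_zero[of s a] powr_ge_zero[of s c] by argo
  then have "K * exp (- s) * (s powr a + s powr b) \<le> K * exp (- s) * (2 * (s powr a + s powr c))"
    using assms by (intro mult_left_mono) auto
  then show ?thesis by (simp add: algebra_simps)
qed

lemma ex_coefficient_small:
  fixes \<gamma> K :: real
  assumes "0 < \<gamma>" "0 \<le> K"
  obtains k where "0 < k" "k * K \<le> 1" "\<gamma> * (k * K) \<le> 1"
proof
  define k where "k = 1 / ((1 + \<gamma>) * (K + 1))"
  have D: "0 < (1 + \<gamma>) * (K + 1)" using assms by (intro mult_pos_pos) auto
  have "0 \<le> \<gamma> * K" using assms by simp
  then have "K \<le> (1 + \<gamma>) * (K + 1)" "\<gamma> * K \<le> (1 + \<gamma>) * (K + 1)"
    using assms by (simp_all add: algebra_simps)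
  with D show "0 < k" "k * K \<le> 1" "\<gamma> * (k * K) \<le> 1"
    by (simp_all add: k_def)
qed

lemma abs_renorm_op_less:
  fixes \<psi> :: "real^'n::finite \<Rightarrow> real" and e :: "nat \<Rightarrow> 'n"
  assumes \<gamma>: "0 < \<gamma>" and \<sigma>: "\<sigma> \<le> \<gamma> - real CARD('n) - 1" and \<beta>: "0 < \<beta>" "\<beta> < 1"
    and k: "0 < k" and K: "0 \<le> K" and kK: "k * K \<le> 1" "\<gamma> * (k * K) \<le> 1"
    and \<psi>: "\<And>x. x \<noteq> 0 \<Longrightarrow> \<bar>\<psi> x\<bar> < k * norm x powr \<sigma> * exp (- 1 * norm x)"
    and conv: "\<And>y::real^'n. y \<noteq> 0 \<Longrightarrow>
      (\<integral>\<^sup>+x. ennreal (norm x powr \<sigma> * exp (- norm x) * (norm (y - x) powr \<sigma> * exp (- norm (y - x)))) \<partial>lborel)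
        \<le> ennreal (K * exp (- norm y) * (norm y powr \<sigma> + norm y powr (\<sigma> + \<gamma> - 1)))"
    and \<eta>: "\<eta> \<noteq> 0"
  shows "\<bar>renorm_op e \<gamma> \<beta> \<psi> \<eta>\<bar> < k * norm \<eta> powr \<sigma> * exp (- 1 * norm \<eta>)"
proof -
  define c where "c = \<gamma> - real CARD('n) - 1"
  define T where "T = 1 / \<beta>"
  define P where "P = (\<Prod>k\<in>{1..CARD('n) - 2}. sin (polar_angle e \<eta> k))"
  define W where "W t x = cos (azimuthal_angle e x - azimuthal_angle e \<eta>)
    * sin (azimuthal_angle e (t *\<^sub>R \<eta> - x) - azimuthal_angle e \<eta>)" for t x
  define A where "A = \<beta> powr c * exp (norm \<eta> powr \<gamma> * (1 - \<beta> powr (- \<gamma>))) * \<psi> ((1 / \<beta>) *\<^sub>R \<eta>)"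
  define Q where "Q = (LBINT t=1..T. exp (norm \<eta> powr \<gamma> * (1 - t powr \<gamma>)) * norm \<eta> * P / t powr c
      * (\<integral>x. \<psi> x * \<psi> (t *\<^sub>R \<eta> - x) * W t x \<partial>lborel))"
  define g where "g = renorm_envelope \<gamma> (\<sigma> - c) (norm \<eta>) T"
  have T: "1 \<le> T" using \<beta> by (simp add: T_def)
  have "renorm_op e \<gamma> \<beta> \<psi> \<eta> = A + \<gamma> * Q"
    by (simp add: renorm_op_def Let_def A_def Q_def P_def W_def c_def T_def mult.assoc)
  then have "\<bar>renorm_op e \<gamma> \<beta> \<psi> \<eta>\<bar> \<le> \<bar>A\<bar> + \<gamma> * \<bar>Q\<bar>"
    using \<gamma> abs_triangle_ineq[of A "\<gamma> * Q"] by (simp add: abs_mult)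
  also have "\<dots> < k * norm \<eta> powr \<sigma> * g + \<gamma> * (k * (norm \<eta> powr \<sigma> / \<gamma> * (exp (- norm \<eta>) - g)))"
  proof (rule add_less_le_mono)
    show "\<bar>A\<bar> < k * norm \<eta> powr \<sigma> * g"
      unfolding A_def g_def T_def using \<beta>(1) \<eta> \<psi> by (rule abs_renorm_linear_term_less)
    have "\<bar>Q\<bar> \<le> k * (norm \<eta> powr \<sigma> / \<gamma> * (exp (- norm \<eta>) - g))"
      unfolding Q_def g_def using \<eta> T \<gamma> \<sigma> k K kK \<psi> conv
    proof (intro abs_renorm_quadratic_term_le)
      show "\<bar>P\<bar> \<le> 1" unfolding P_def by (rule abs_prod_sin_le_one)
      show "\<bar>W t x\<bar> \<le> 1" for t x by (simp add: W_def abs_mult mult_le_one)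
    qed (auto simp: c_def)
    then show "\<gamma> * \<bar>Q\<bar> \<le> \<gamma> * (k * (norm \<eta> powr \<sigma> / \<gamma> * (exp (- norm \<eta>) - g)))"
      by (rule mult_left_mono) (use \<gamma> in simp)
  qed
  also have "\<dots> = k * norm \<eta> powr \<sigma> * exp (- 1 * norm \<eta>)"
    using \<gamma> by (simp add: field_simps)
  finally show ?thesis .
qed

theorem proposition8p1:
  fixes \<sigma> \<gamma> :: real and e :: "nat \<Rightarrow> 'n::finite"
  assumes "CARD('n) \<ge> 2"
    and "bij_betw e {..<CARD('n)} UNIV"
    and "max (- real CARD('n)) (-3) < \<sigma>" and "\<sigma> < 0"
    and "\<sigma> \<noteq> -2" and "\<sigma> \<noteq> - real CARD('n) / 2"
    and "\<gamma> - real CARD('n) - 1 \<ge> \<sigma>"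
  shows "\<exists>k>0. \<exists>b>0. \<forall>\<beta>. 0 < \<beta> \<and> \<beta> < 1 \<longrightarrow>
           (\<forall>\<psi>\<in>(M_set \<sigma> k b :: (real^'n \<Rightarrow> real) set). renorm_op e \<gamma> \<beta> \<psi> \<in> M_set \<sigma> k b)"
proof -
  have \<sigma>: "\<sigma> < 0" "0 < \<sigma> + DIM(real^'n)" "\<sigma> \<le> \<gamma> - real CARD('n) - 1"
    using assms(3,4,7) by auto
  then have \<gamma>: "0 < \<gamma>" by simp
  obtain K where K: "0 \<le> K" and conv_K: "\<And>y::real^'n. y \<noteq> 0 \<Longrightarrow>
    (\<integral>\<^sup>+x. ennreal (norm x powr \<sigma> * exp (- norm x) * (norm (y - x) powr \<sigma> * exp (- norm (y - x)))) \<partial>lborel)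
      \<le> ennreal (K * exp (- norm y) * (norm y powr \<sigma> + norm y powr (2 * \<sigma> + DIM(real^'n))))"
    using nn_integral_powr_exp_convolution_le[OF \<sigma>(1,2)] by blast
  have conv: "(\<integral>\<^sup>+x. ennreal (norm x powr \<sigma> * exp (- norm x) * (norm (y - x) powr \<sigma> * exp (- norm (y - x)))) \<partial>lborel)
      \<le> ennreal (2 * K * exp (- norm y) * (norm y powr \<sigma> + norm y powr (\<sigma> + \<gamma> - 1)))"
    if y: "y \<noteq> 0" for y :: "real^'n"
    using conv_K[OF y] exp_powr_sum_le_double[of "norm y" K \<sigma> "2 * \<sigma> + DIM(real^'n)" "\<sigma> + \<gamma> - 1"] y K \<sigma>
    by (auto intro: order_trans ennreal_leI)
  obtain k where k: "0 < k" "k * (2 * K) \<le> 1" "\<gamma> * (k * (2 * K)) \<le> 1"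
    using ex_coefficient_small[OF \<gamma>, of "2 * K"] K by auto
  show ?thesis
  proof (rule exI[of _ k], intro conjI k(1), rule exI[of _ 1], intro conjI zero_less_one allI impI ballI)
    fix \<beta> :: real and \<psi> :: "real^'n \<Rightarrow> real"
    assume \<beta>: "0 < \<beta> \<and> \<beta> < 1" and "\<psi> \<in> M_set \<sigma> k 1"
    then have "renorm_op e \<gamma> \<beta> \<psi> \<in> borel_measurable borel"
      and \<psi>: "\<And>x. x \<noteq> 0 \<Longrightarrow> \<bar>\<psi> x\<bar> < k * norm x powr \<sigma> * exp (- 1 * norm x)"
      by (auto simp: M_set_def intro: borel_measurable_renorm_op)
    then show "renorm_op e \<gamma> \<beta> \<psi> \<in> M_set \<sigma> k 1"
      using abs_renorm_op_less[OF \<gamma> \<sigma>(3) _ _ k(1) _ k(2,3) \<psi> conv] \<beta> K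
      by (auto simp: M_set_def)
  qed
qed

end
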